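(* Let $n,d\ge2$, $c\in\mathbb{C}$, and $f=(x_0^d + c x_1^d : x_1^d : \dots : x_n^d)$, an endomorphism of $\mathbb{P}^n_{\mathbb{C}}$. Then the critical locus $C_f = V(x_0 x_1\cdots x_n)$ is dynamically improper under $f$, and $C_f$ is preperiodic under $f$ if and only if $0$ is preperiodic under $g(z)=z^d+c$.
   Context: The critical locus of $f=(f_0:\dots:f_n)$ is $C_f=V(\det(\partial f_i/\partial x_j))$. A hypersurface $H$ is improper under $f$ if for every irreducible component $Z$ of $H$ there exist integers $0\le i_0<\dots<i_n$ with $f^{i_0}(Z)\cap\dots\cap f^{i_n}(Z)\neq\varnothing$; it is dynamically improper if improper under $f^r$ for every $r>0$. A subvariety $X$ is preperiodic under $f$ if for every irreducible component $Z$ of $X$ there exist distinct $s,t\ge0$ with $f^s(Z)=f^t(Z)$. *)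

theory Defs
  imports "HOL-Analysis.Analysis"
begin

text \<open>Projective space P^n over C is modelled by nonzero vectors in complex^'n
  (with CARD('n) = n+1); a subset of P^n is a scaling-invariant set of nonzero vectors.\<close>

inductive polyfun :: "(complex ^ 'n \<Rightarrow> complex) \<Rightarrow> bool" where
  pf_const: "polyfun (\<lambda>x. c)"
| pf_coord: "polyfun (\<lambda>x. x $ i)"
| pf_add: "polyfun p \<Longrightarrow> polyfun q \<Longrightarrow> polyfun (\<lambda>x. p x + q x)"
| pf_mult: "polyfun p \<Longrightarrow> polyfun q \<Longrightarrow> polyfun (\<lambda>x. p x * q x)"

definition hom_poly :: "(complex ^ 'n \<Rightarrow> complex) \<Rightarrow> bool" where
  "hom_poly p \<longleftrightarrow> polyfun p \<and> (\<exists>k::nat. \<forall>t x. p (t *s x) = t ^ k * p x)"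

definition proj_zero_set :: "(complex ^ 'n \<Rightarrow> complex) set \<Rightarrow> (complex ^ 'n) set" where
  "proj_zero_set S = {x. x \<noteq> 0 \<and> (\<forall>p\<in>S. p x = 0)}"

definition zariski_closed :: "(complex ^ 'n) set \<Rightarrow> bool" where
  "zariski_closed X \<longleftrightarrow> (\<exists>S. (\<forall>p\<in>S. hom_poly p) \<and> X = proj_zero_set S)"

definition irreducible_closed :: "(complex ^ 'n) set \<Rightarrow> bool" where
  "irreducible_closed X \<longleftrightarrow> zariski_closed X \<and> X \<noteq> {} \<and>
     (\<forall>Y1 Y2. zariski_closed Y1 \<and> zariski_closed Y2 \<and> X = Y1 \<union> Y2 \<longrightarrow> X = Y1 \<or> X = Y2)"

definition irr_component :: "(complex ^ 'n) set \<Rightarrow> (complex ^ 'n) set \<Rightarrow> bool" where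
  "irr_component Z X \<longleftrightarrow> irreducible_closed Z \<and> Z \<subseteq> X \<and>
     (\<forall>W. irreducible_closed W \<and> Z \<subseteq> W \<and> W \<subseteq> X \<longrightarrow> W = Z)"

definition pimg :: "(complex ^ 'n \<Rightarrow> complex ^ 'n) \<Rightarrow> (complex ^ 'n) set \<Rightarrow> (complex ^ 'n) set" where
  "pimg G Z = {t *s y | t y. t \<noteq> 0 \<and> y \<in> G ` Z}"

definition jacobian :: "(complex ^ 'n \<Rightarrow> complex ^ 'n) \<Rightarrow> complex ^ 'n \<Rightarrow> complex ^ 'n ^ 'n" where
  "jacobian F x = (\<chi> i j. deriv (\<lambda>t. F (x + (\<chi> k. if k = j then t else 0)) $ i) 0)"

definition critical_locus :: "(complex ^ 'n \<Rightarrow> complex ^ 'n) \<Rightarrow> (complex ^ 'n) set" where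
  "critical_locus F = {x. x \<noteq> 0 \<and> det (jacobian F x) = 0}"

text \<open>Improper: n = CARD('n) - 1, indices i_0 < ... < i_n.\<close>
definition improper :: "(complex ^ 'n \<Rightarrow> complex ^ 'n) \<Rightarrow> (complex ^ 'n) set \<Rightarrow> bool" where
  "improper G H \<longleftrightarrow> (\<forall>Z. irr_component Z H \<longrightarrow>
     (\<exists>i::nat \<Rightarrow> nat. (\<forall>k. Suc k < CARD('n) \<longrightarrow> i k < i (Suc k)) \<and>
        (\<Inter>k\<in>{..<CARD('n)}. (pimg G ^^ (i k)) Z) \<noteq> {}))"

definition dyn_improper :: "(complex ^ 'n \<Rightarrow> complex ^ 'n) \<Rightarrow> (complex ^ 'n) set \<Rightarrow> bool" where
  "dyn_improper F H \<longleftrightarrow> (\<forall>r>0. improper (F ^^ r) H)"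

definition preperiodic_var :: "(complex ^ 'n \<Rightarrow> complex ^ 'n) \<Rightarrow> (complex ^ 'n) set \<Rightarrow> bool" where
  "preperiodic_var F X \<longleftrightarrow> (\<forall>Z. irr_component Z X \<longrightarrow>
     (\<exists>s t. s \<noteq> t \<and> (pimg F ^^ s) Z = (pimg F ^^ t) Z))"

end

theory Submission
  imports Defs "HOL-Complex_Analysis.Conformal_Mappings"
begin

text \<open>The Jacobian of f is diagonal up to one row operation, so C_f is the union of the
  coordinate hyperplanes H_i = V(x_i), and these are its irreducible components. Every H_i with
  i \<noteq> 0 is mapped onto itself, while f maps the hyperplane {x_0 = u x_1} onto
  {x_0 = (u^d + c) x_1}; since H_0 is the case u = 0 and distinct u give distinct hyperplanes,
  the orbit of H_0 mirrors the orbit of 0 under z^d + c. Dynamic improperness holds because every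
  H_i contains a coordinate point e_j with j \<noteq> 0, 1, i (there is one as n \<ge> 2), and f fixes it.\<close>

section \<open>Zariski closed subsets of projective space\<close>

lemma zariski_closed_nonzero: "zariski_closed X \<Longrightarrow> 0 \<notin> X"
  unfolding zariski_closed_def proj_zero_set_def by auto

lemma hom_poly_coord: "hom_poly (\<lambda>x::complex^'n. x $ i)"
  unfolding hom_poly_def by (auto intro!: exI[of _ 1] pf_coord)

lemma hom_poly_prod_coords:
  assumes "finite J"
  shows "hom_poly (\<lambda>x::complex^'n. \<Prod>j\<in>J. x $ j)"
  unfolding hom_poly_def
proof
  show "polyfun (\<lambda>x::complex^'n. \<Prod>j\<in>J. x $ j)"
    using assms by induction (auto intro: pf_const pf_mult pf_coord)
qed (auto intro!: exI[of _ "card J"] simp: prod.distrib assms)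

lemma zariski_closed_Int_zero_set:
  assumes "zariski_closed Z" and "hom_poly p"
  shows "zariski_closed (Z \<inter> {x. p x = 0})"
proof -
  obtain S where S: "\<forall>q\<in>S. hom_poly q" "Z = proj_zero_set S"
    using assms(1) unfolding zariski_closed_def by blast
  have "Z \<inter> {x. p x = 0} = proj_zero_set (insert p S)"
    using S(2) unfolding proj_zero_set_def by auto
  then show ?thesis unfolding zariski_closed_def using S(1) assms(2) by blast
qed

lemma irreducible_closed_subset_zero_set_mult:
  assumes Z: "irreducible_closed Z" and "hom_poly p" "hom_poly q"
    and "Z \<subseteq> {x. p x * q x = 0}"
  shows "Z \<subseteq> {x. p x = 0} \<or> Z \<subseteq> {x. q x = 0}"
proof -
  have closed: "zariski_closed Z" using Z unfolding irreducible_closed_def by blast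
  have "Z = (Z \<inter> {x. p x = 0}) \<union> (Z \<inter> {x. q x = 0})" using assms(4) by auto
  then have "Z = Z \<inter> {x. p x = 0} \<or> Z = Z \<inter> {x. q x = 0}"
    using Z zariski_closed_Int_zero_set[OF closed] assms(2,3)
    unfolding irreducible_closed_def by blast
  then show ?thesis by blast
qed

lemma polyfun_holomorphic_on_line: "polyfun p \<Longrightarrow> (\<lambda>t. p (u + t *s v)) holomorphic_on UNIV"
proof (induction rule: polyfun.induct)
  case (pf_coord i)
  show ?case by (simp, intro holomorphic_intros)
qed (auto intro: holomorphic_intros)

lemma polyfun_line_eq_0:
  assumes "polyfun p" and "r > 0" and "\<And>t. t \<in> ball 0 r \<Longrightarrow> p (u + t *s v) = 0"
  shows "p (u + v) = 0"
proof -
  have "p (u + 1 *s v) = 0"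
    by (rule analytic_continuation_open[of "ball 0 r" UNIV _ "\<lambda>_. 0",
          OF _ _ _ _ _ polyfun_holomorphic_on_line[OF assms(1)]])
       (use assms(2,3) in auto)
  then show ?thesis by simp
qed

lemma polyfun_line_nonzero_near:
  assumes "polyfun p" and "p u \<noteq> 0" and "u \<noteq> 0"
  obtains r where "r > 0" and "\<And>t. t \<in> ball 0 r \<Longrightarrow> p (u + t *s v) \<noteq> 0 \<and> u + t *s v \<noteq> 0"
proof -
  have "continuous_on UNIV (\<lambda>t. p (u + t *s v))"
    using polyfun_holomorphic_on_line[OF assms(1)] holomorphic_on_imp_continuous_on by blast
  moreover have "(\<lambda>t::complex. u + t *s v) = (\<lambda>t. \<chi> k. u $ k + t * v $ k)"
    by (auto simp: vec_eq_iff)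
  then have "continuous_on UNIV (\<lambda>t::complex. u + t *s v)"
    by (simp only:) (intro continuous_intros)
  ultimately have "open ({t. p (u + t *s v) \<noteq> 0} \<inter> {t. u + t *s v \<noteq> 0})"
    by (intro open_Int open_Collect_neq continuous_on_const)
  moreover have "0 \<in> {t. p (u + t *s v) \<noteq> 0} \<inter> {t. u + t *s v \<noteq> 0}"
    using assms(2,3) by simp
  ultimately obtain r where "r > 0" "ball 0 r \<subseteq> {t. p (u + t *s v) \<noteq> 0} \<inter> {t. u + t *s v \<noteq> 0}"
    using open_contains_ball by blast
  then show ?thesis using that by blast
qed

text \<open>If V - {0} = Y1 \<union> Y2 properly, take u outside Y1 and w outside Y2. Near u the line
  through u and w avoids Y1, so an equation of Y2 not vanishing at w vanishes on an open piece of
  that line, hence on all of it by analytic continuation.\<close>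

lemma irreducible_closed_punctured_subspace:
  fixes V :: "(complex^'n) set"
  assumes V: "vec.subspace V" and "V \<noteq> {0}" and closed: "zariski_closed (V - {0})"
  shows "irreducible_closed (V - {0})"
  unfolding irreducible_closed_def
proof (intro conjI allI impI)
  show "V - {0} \<noteq> {}" using assms(2) vec.subspace_0[OF V] by blast
  fix Y1 Y2 :: "(complex^'n) set"
  assume Y: "zariski_closed Y1 \<and> zariski_closed Y2 \<and> V - {0} = Y1 \<union> Y2"
  show "V - {0} = Y1 \<or> V - {0} = Y2"
  proof (rule ccontr)
    assume "\<not> (V - {0} = Y1 \<or> V - {0} = Y2)"
    then obtain u w where u: "u \<in> V - {0}" "u \<notin> Y1" and w: "w \<in> V - {0}" "w \<notin> Y2"
      using Y by blast
    obtain S1 where S1: "\<forall>p\<in>S1. hom_poly p" "Y1 = proj_zero_set S1"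
      using Y unfolding zariski_closed_def by blast
    obtain S2 where S2: "\<forall>p\<in>S2. hom_poly p" "Y2 = proj_zero_set S2"
      using Y unfolding zariski_closed_def by blast
    obtain p1 where p1: "p1 \<in> S1" "p1 u \<noteq> 0"
      using u S1(2) unfolding proj_zero_set_def by auto
    obtain p2 where p2: "p2 \<in> S2" "p2 w \<noteq> 0"
      using w S2(2) unfolding proj_zero_set_def by auto
    have "polyfun p1" "polyfun p2"
      using S1(1) S2(1) p1(1) p2(1) unfolding hom_poly_def by auto
    obtain r where r: "r > 0"
      "\<And>t. t \<in> ball 0 r \<Longrightarrow> p1 (u + t *s (w - u)) \<noteq> 0 \<and> u + t *s (w - u) \<noteq> 0"
      using polyfun_line_nonzero_near[OF \<open>polyfun p1\<close> p1(2), of "w - u"] u by blast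
    have "p2 (u + t *s (w - u)) = 0" if t: "t \<in> ball 0 r" for t
    proof -
      have "u \<in> V" "w \<in> V" using u w by auto
      then have "u + t *s (w - u) \<in> V"
        by (metis vec.subspace_add[OF V] vec.subspace_scale[OF V] vec.subspace_diff[OF V])
      moreover have "u + t *s (w - u) \<notin> Y1"
        using r(2)[OF t] p1 S1(2) unfolding proj_zero_set_def by auto
      ultimately have "u + t *s (w - u) \<in> Y2" using r(2)[OF t] Y by blast
      then show ?thesis using p2(1) S2(2) unfolding proj_zero_set_def by auto
    qed
    then have "p2 (u + (w - u)) = 0" by (rule polyfun_line_eq_0[OF \<open>polyfun p2\<close> r(1)])
    then show False using p2(2) by simp
  qed
qed (use closed in simp)

lemma pimg_eq_image:
  assumes "G ` Z = Y" and "\<And>t y. t \<noteq> 0 \<Longrightarrow> y \<in> Y \<Longrightarrow> t *s y \<in> Y"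
  shows "pimg G Z = Y"
  unfolding pimg_def using assms by (force intro: exI[of _ 1])

lemma fixed_point_in_pimg_iterate: "v \<in> Z \<Longrightarrow> G v = v \<Longrightarrow> v \<in> (pimg G ^^ k) Z"
  by (induction k) (force simp: pimg_def intro: exI[of _ 1])+

lemma dyn_improper_if_components_contain_fixed_points:
  assumes "\<And>Z. irr_component Z X \<Longrightarrow> \<exists>v\<in>Z. F v = v"
  shows "dyn_improper F X"
  unfolding dyn_improper_def improper_def
proof (intro allI impI)
  fix r :: nat and Z assume "irr_component Z X"
  then obtain v where v: "v \<in> Z" "F v = v" using assms by blast
  have "(F ^^ r) v = v" by (induction r) (simp_all add: v(2))
  then have "v \<in> (\<Inter>k\<in>{..<CARD('n)}. (pimg (F ^^ r) ^^ id k) Z)"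
    using fixed_point_in_pimg_iterate[OF v(1)] by simp
  then show "\<exists>i::nat \<Rightarrow> nat. (\<forall>k. Suc k < CARD('n) \<longrightarrow> i k < i (Suc k)) \<and>
      (\<Inter>k\<in>{..<CARD('n)}. (pimg (F ^^ r) ^^ i k) Z) \<noteq> {}"
    by (intro exI[of _ id]) auto
qed

section \<open>The coordinate hyperplanes\<close>

definition coord_hyperplane :: "'n \<Rightarrow> (complex^'n) set" where
  "coord_hyperplane i = {x. x \<noteq> 0 \<and> x $ i = 0}"

definition coord_hyperplanes_union :: "(complex^'n) set" where
  "coord_hyperplanes_union = {x. x \<noteq> 0 \<and> (\<Prod>i\<in>UNIV. x $ i) = 0}"

lemma ex_index_notin:
  assumes "card S < CARD('n::finite)"
  shows "\<exists>j::'n. j \<notin> S"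
proof (rule ccontr)
  assume "\<nexists>j. j \<notin> S"
  then have "S = UNIV" by blast
  then show False using assms by simp
qed

lemma zariski_closed_coord_hyperplane: "zariski_closed (coord_hyperplane i)"
proof -
  have "coord_hyperplane i = proj_zero_set {\<lambda>x. x $ i}"
    unfolding coord_hyperplane_def proj_zero_set_def by auto
  then show ?thesis unfolding zariski_closed_def using hom_poly_coord by blast
qed

lemma irreducible_coord_hyperplane:
  assumes "CARD('n::finite) \<ge> 2"
  shows "irreducible_closed (coord_hyperplane (i::'n))"
proof -
  obtain j :: 'n where "j \<noteq> i" using ex_index_notin[of "{i}"] assms by auto
  have eq: "coord_hyperplane i = {x. x $ i = 0} - {0}"
    unfolding coord_hyperplane_def by blast
  have "vec.subspace {x::complex^'n. x $ i = 0}" by (auto simp: vec.subspace_def)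
  moreover have "axis j 1 \<in> {x::complex^'n. x $ i = 0}" "axis j (1::complex) \<noteq> 0"
    using \<open>j \<noteq> i\<close> by (auto simp: axis_def vec_eq_iff)
  then have "{x::complex^'n. x $ i = 0} \<noteq> {0}" by blast
  ultimately show ?thesis
    unfolding eq using zariski_closed_coord_hyperplane[of i, unfolded eq]
    by (rule irreducible_closed_punctured_subspace)
qed

lemma coord_hyperplane_subset_iff:
  "coord_hyperplane i \<subseteq> coord_hyperplane (j::'n::finite) \<longleftrightarrow> i = j"
proof
  assume sub: "coord_hyperplane i \<subseteq> coord_hyperplane j"
  show "i = j"
  proof (rule ccontr)
    assume "i \<noteq> j"
    define v :: "complex^'n" where "v = (\<chi> k. if k = i then 0 else 1)"
    have "v \<in> coord_hyperplane i" "v \<notin> coord_hyperplane j"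
      using \<open>i \<noteq> j\<close> unfolding v_def coord_hyperplane_def by (auto simp: vec_eq_iff)
    then show False using sub by blast
  qed
qed simp

lemma irreducible_closed_subset_coord_hyperplane:
  fixes Z :: "(complex^'n::finite) set"
  assumes Z: "irreducible_closed Z"
  shows "finite J \<Longrightarrow> Z \<subseteq> {x. (\<Prod>j\<in>J. x $ j) = 0} \<Longrightarrow> \<exists>j\<in>J. Z \<subseteq> coord_hyperplane j"
proof (induction J rule: finite_induct)
  case empty
  then show ?case using Z unfolding irreducible_closed_def by auto
next
  case (insert i J)
  have "Z \<subseteq> {x. x $ i = 0} \<or> Z \<subseteq> {x. (\<Prod>j\<in>J. x $ j) = 0}"
    using insert.prems insert.hyps
    by (intro irreducible_closed_subset_zero_set_mult[OF Z hom_poly_coord hom_poly_prod_coords[OF insert.hyps(1)]]) auto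
  moreover have "0 \<notin> Z"
    using Z zariski_closed_nonzero unfolding irreducible_closed_def by blast
  ultimately show ?case using insert.IH unfolding coord_hyperplane_def by blast
qed

lemma irr_component_coord_hyperplanes_union_iff:
  assumes "CARD('n::finite) \<ge> 2"
  shows "irr_component Z (coord_hyperplanes_union :: (complex^'n) set)
    \<longleftrightarrow> (\<exists>i. Z = coord_hyperplane i)"
proof -
  have sub: "coord_hyperplane i \<subseteq> coord_hyperplanes_union" for i :: 'n
    unfolding coord_hyperplane_def coord_hyperplanes_union_def by auto
  have cover: "\<exists>i. W \<subseteq> coord_hyperplane i"
    if "irreducible_closed W" "W \<subseteq> coord_hyperplanes_union" for W :: "(complex^'n) set"
    using irreducible_closed_subset_coord_hyperplane[OF that(1), of UNIV] that(2)
    unfolding coord_hyperplanes_union_def by auto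
  show ?thesis
  proof
    assume comp: "irr_component Z coord_hyperplanes_union"
    then obtain i where "Z \<subseteq> coord_hyperplane i"
      using cover unfolding irr_component_def by blast
    moreover have "\<forall>W. irreducible_closed W \<and> Z \<subseteq> W \<and> W \<subseteq> coord_hyperplanes_union \<longrightarrow> W = Z"
      using comp unfolding irr_component_def by blast
    ultimately have "coord_hyperplane i = Z"
      using irreducible_coord_hyperplane[OF assms, of i] sub[of i] by blast
    then show "\<exists>i. Z = coord_hyperplane i" by blast
  next
    assume "\<exists>i. Z = coord_hyperplane i"
    then obtain i where Z: "Z = coord_hyperplane i" by blast
    have maximal: "W = coord_hyperplane i"
      if W: "irreducible_closed W" "coord_hyperplane i \<subseteq> W" "W \<subseteq> coord_hyperplanes_union" for W
    proof -
      obtain k where k: "W \<subseteq> coord_hyperplane k" using cover W(1,3) by blast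
      with W(2) have "coord_hyperplane i \<subseteq> coord_hyperplane k" by (rule subset_trans)
      then have "i = k" by (simp only: coord_hyperplane_subset_iff)
      with k W(2) show ?thesis by blast
    qed
    show "irr_component Z coord_hyperplanes_union"
      unfolding irr_component_def Z
      using irreducible_coord_hyperplane[OF assms, of i] sub[of i] maximal by blast
  qed
qed

section \<open>The twisted power map\<close>

definition twisted_power_map :: "'n \<Rightarrow> 'n \<Rightarrow> complex \<Rightarrow> nat \<Rightarrow> complex^'n \<Rightarrow> complex^'n" where
  "twisted_power_map a b c d x = (\<chi> i. if i = a then x $ a ^ d + c * x $ b ^ d else x $ i ^ d)"

lemma has_field_derivative_power_coord:
  "((\<lambda>t::complex. (u + (if k = j then t else 0)) ^ d) has_field_derivative
    (if k = j then of_nat d * u ^ (d - 1) else 0)) (at 0)"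
proof (cases "k = j")
  case True
  have "((\<lambda>t::complex. (u + t) ^ d) has_field_derivative of_nat d * (u + 0) ^ (d - 1) * 1) (at 0)"
    by (intro derivative_eq_intros) auto
  then show ?thesis using True by simp
qed simp

lemma jacobian_twisted_power_map:
  fixes x :: "complex^'n"
  assumes ab: "a \<noteq> b"
  shows "jacobian (twisted_power_map a b c d) x $ i $ j =
     (if i = j then of_nat d * x $ i ^ (d - 1) else 0)
     + (if i = a \<and> j = b then c * (of_nat d * x $ b ^ (d - 1)) else 0)"
proof -
  have line: "(\<lambda>t. twisted_power_map a b c d (x + (\<chi> k. if k = j then t else 0)) $ i) =
     (\<lambda>t. if i = a then (x $ a + (if a = j then t else 0)) ^ d + c * (x $ b + (if b = j then t else 0)) ^ d
          else (x $ i + (if i = j then t else 0)) ^ d)"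
    unfolding twisted_power_map_def by auto
  have "((\<lambda>t. twisted_power_map a b c d (x + (\<chi> k. if k = j then t else 0)) $ i) has_field_derivative
     ((if i = j then of_nat d * x $ i ^ (d - 1) else 0)
      + (if i = a \<and> j = b then c * (of_nat d * x $ b ^ (d - 1)) else 0))) (at 0)"
  proof (cases "i = a")
    case True
    have "((\<lambda>t. (x $ a + (if a = j then t else 0)) ^ d + c * (x $ b + (if b = j then t else 0)) ^ d)
       has_field_derivative ((if a = j then of_nat d * x $ a ^ (d - 1) else 0)
         + c * (if b = j then of_nat d * x $ b ^ (d - 1) else 0))) (at 0)"
      by (intro derivative_intros DERIV_cmult has_field_derivative_power_coord)
    then show ?thesis unfolding line using True ab by (auto simp: algebra_simps)
  next
    case False
    then show ?thesis unfolding line using has_field_derivative_power_coord[of "x $ i" i j d] by simp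
  qed
  from DERIV_imp_deriv[OF this] show ?thesis unfolding jacobian_def by simp
qed

text \<open>Row a of the Jacobian is row a plus c times row b of a diagonal matrix.\<close>

lemma det_jacobian_twisted_power_map:
  fixes x :: "complex^'n"
  assumes "a \<noteq> b"
  shows "det (jacobian (twisted_power_map a b c d) x) = (\<Prod>i\<in>UNIV. of_nat d * x $ i ^ (d - 1))"
proof -
  define D :: "complex^'n^'n" where "D = (\<chi> i j. if i = j then of_nat d * x $ i ^ (d - 1) else 0)"
  have "jacobian (twisted_power_map a b c d) x = (\<chi> k. if k = a then row a D + c *s row b D else row k D)"
    using assms by (auto simp: vec_eq_iff jacobian_twisted_power_map D_def row_def)
  then have "det (jacobian (twisted_power_map a b c d) x) = det D"
    using det_row_operation[OF assms] by simp
  also have "\<dots> = (\<Prod>i\<in>UNIV. D $ i $ i)" by (rule det_diagonal) (simp add: D_def)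
  finally show ?thesis by (simp add: D_def)
qed

lemma critical_locus_twisted_power_map:
  assumes "a \<noteq> b" and "d \<ge> 2"
  shows "critical_locus (twisted_power_map a b c d) = coord_hyperplanes_union"
  unfolding critical_locus_def coord_hyperplanes_union_def det_jacobian_twisted_power_map[OF assms(1)]
  using assms(2) by auto

lemma twisted_power_map_eq_0_iff:
  assumes "a \<noteq> b" and "d > 0"
  shows "twisted_power_map a b c d x = 0 \<longleftrightarrow> x = 0"
proof
  assume zero: "twisted_power_map a b c d x = 0"
  have off_a: "x $ k = 0" if "k \<noteq> a" for k
    using zero[THEN arg_cong[where f = "\<lambda>y. y $ k"]] that assms(2)
    by (simp add: twisted_power_map_def)
  then have "x $ a ^ d = 0"
    using zero[THEN arg_cong[where f = "\<lambda>y. y $ a"]] assms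
    by (simp add: twisted_power_map_def zero_power)
  then have "x $ a = 0" by simp
  with off_a show "x = 0" by (metis vec_eq_iff zero_index)
qed (use assms(2) in \<open>simp add: twisted_power_map_def vec_eq_iff zero_power\<close>)

lemma complex_root_function:
  assumes "d \<noteq> 0"
  obtains r :: "complex \<Rightarrow> complex" where "\<And>z. r z ^ d = z"
proof -
  have "\<forall>z. \<exists>w::complex. w ^ d = z" using exists_complex_root[OF assms] by metis
  then show ?thesis using that by metis
qed

definition ratio_hyperplane :: "'n \<Rightarrow> 'n \<Rightarrow> complex \<Rightarrow> (complex^'n) set" where
  "ratio_hyperplane a b u = {x. x \<noteq> 0 \<and> x $ a = u * x $ b}"

lemma coord_hyperplane_eq_ratio_hyperplane: "coord_hyperplane a = ratio_hyperplane a b 0"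
  unfolding coord_hyperplane_def ratio_hyperplane_def by simp

lemma ratio_hyperplane_eq_iff:
  fixes a b :: "'n::finite"
  assumes "a \<noteq> b"
  shows "ratio_hyperplane a b u = ratio_hyperplane a b v \<longleftrightarrow> u = v"
proof
  assume eq: "ratio_hyperplane a b u = ratio_hyperplane a b v"
  define x :: "complex^'n" where "x = (\<chi> k. if k = a then u else if k = b then 1 else 0)"
  have "x \<in> ratio_hyperplane a b u"
    using assms unfolding x_def ratio_hyperplane_def by (auto simp: vec_eq_iff)
  then show "u = v" using eq assms unfolding x_def ratio_hyperplane_def by simp
qed simp

lemma image_twisted_power_map_ratio_hyperplane:
  assumes ab: "a \<noteq> b" and "d > 0"
  shows "twisted_power_map a b c d ` ratio_hyperplane a b u = ratio_hyperplane a b (u ^ d + c)"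
proof
  show "twisted_power_map a b c d ` ratio_hyperplane a b u \<subseteq> ratio_hyperplane a b (u ^ d + c)"
  proof
    fix y assume "y \<in> twisted_power_map a b c d ` ratio_hyperplane a b u"
    then obtain x where x: "x \<in> ratio_hyperplane a b u" "y = twisted_power_map a b c d x" by blast
    have "x \<noteq> 0" using x(1) unfolding ratio_hyperplane_def by blast
    then have "y \<noteq> 0" using x(2) twisted_power_map_eq_0_iff[OF assms] by simp
    moreover have "y $ a = (u ^ d + c) * y $ b"
      using x ab unfolding ratio_hyperplane_def
      by (simp add: twisted_power_map_def power_mult_distrib distrib_right)
    ultimately show "y \<in> ratio_hyperplane a b (u ^ d + c)" unfolding ratio_hyperplane_def by blast
  qed
  obtain r :: "complex \<Rightarrow> complex" where r: "\<And>z. r z ^ d = z"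
    using complex_root_function \<open>d > 0\<close> by blast
  show "ratio_hyperplane a b (u ^ d + c) \<subseteq> twisted_power_map a b c d ` ratio_hyperplane a b u"
  proof
    fix y assume y: "y \<in> ratio_hyperplane a b (u ^ d + c)"
    define x where "x = (\<chi> k. if k = a then u * r (y $ b) else r (y $ k))"
    have Fx: "twisted_power_map a b c d x = y"
      using y ab r unfolding x_def twisted_power_map_def ratio_hyperplane_def
      by (auto simp: vec_eq_iff power_mult_distrib algebra_simps)
    then have "x \<in> ratio_hyperplane a b u"
      using y ab twisted_power_map_eq_0_iff[OF assms]
      unfolding x_def ratio_hyperplane_def by auto
    then show "y \<in> twisted_power_map a b c d ` ratio_hyperplane a b u" using Fx by blast
  qed
qed

lemma image_twisted_power_map_coord_hyperplane:
  assumes ab: "a \<noteq> b" and "d > 0" and "i \<noteq> a"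
  shows "twisted_power_map a b c d ` coord_hyperplane i = coord_hyperplane i"
proof
  show "twisted_power_map a b c d ` coord_hyperplane i \<subseteq> coord_hyperplane i"
    using twisted_power_map_eq_0_iff[OF assms(1,2)] assms(2,3)
    unfolding coord_hyperplane_def by (auto simp: twisted_power_map_def)
  obtain r :: "complex \<Rightarrow> complex" where r: "\<And>z. r z ^ d = z"
    using complex_root_function \<open>d > 0\<close> by blast
  have r0: "r 0 = 0" using r[of 0] \<open>d > 0\<close> by simp
  show "coord_hyperplane i \<subseteq> twisted_power_map a b c d ` coord_hyperplane i"
  proof
    fix y assume y: "y \<in> coord_hyperplane i"
    define x where "x = (\<chi> k. if k = a then r (y $ a - c * y $ b) else r (y $ k))"
    have Fx: "twisted_power_map a b c d x = y"
      using ab r unfolding x_def twisted_power_map_def by (auto simp: vec_eq_iff)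
    then have "x \<in> coord_hyperplane i"
      using y r0 \<open>i \<noteq> a\<close> twisted_power_map_eq_0_iff[OF assms(1,2)]
      unfolding x_def coord_hyperplane_def by auto
    then show "y \<in> twisted_power_map a b c d ` coord_hyperplane i" using Fx by blast
  qed
qed

lemma twisted_power_map_axis:
  assumes "j \<noteq> b" and "d > 0"
  shows "twisted_power_map a b c d (axis j 1) = axis j 1"
  using assms by (auto simp: twisted_power_map_def vec_eq_iff axis_def zero_power)

lemma pimg_twisted_power_map_coord_hyperplane:
  assumes "a \<noteq> b" and "d > 0" and "i \<noteq> a"
  shows "pimg (twisted_power_map a b c d) (coord_hyperplane i) = coord_hyperplane i"
  using image_twisted_power_map_coord_hyperplane[OF assms]
  by (rule pimg_eq_image) (auto simp: coord_hyperplane_def vec_eq_iff)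

lemma pimg_twisted_power_map_ratio_hyperplane:
  assumes "a \<noteq> b" and "d > 0"
  shows "pimg (twisted_power_map a b c d) (ratio_hyperplane a b u) = ratio_hyperplane a b (u ^ d + c)"
  using image_twisted_power_map_ratio_hyperplane[OF assms]
  by (rule pimg_eq_image) (auto simp: ratio_hyperplane_def vec_eq_iff)

lemma pimg_iterate_twisted_power_map_coord_hyperplane:
  assumes "a \<noteq> b" and "d > 0"
  shows "(pimg (twisted_power_map a b c d) ^^ k) (coord_hyperplane a)
    = ratio_hyperplane a b (((\<lambda>z. z ^ d + c) ^^ k) 0)"
  by (induction k)
    (simp_all add: coord_hyperplane_eq_ratio_hyperplane pimg_twisted_power_map_ratio_hyperplane[OF assms])

section \<open>Dynamics of the critical locus\<close>

lemma dyn_improper_twisted_power_map: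
  assumes "CARD('n::finite) \<ge> 3" and "d > 0"
  shows "dyn_improper (twisted_power_map a b c d) (coord_hyperplanes_union :: (complex^'n) set)"
proof (rule dyn_improper_if_components_contain_fixed_points)
  fix Z assume "irr_component Z (coord_hyperplanes_union :: (complex^'n) set)"
  moreover have "CARD('n) \<ge> 2" using assms(1) by simp
  ultimately obtain i where Z: "Z = coord_hyperplane i"
    using irr_component_coord_hyperplanes_union_iff by blast
  have "card {i, b} < CARD('n)" using assms(1) by (simp add: card_insert_if)
  then obtain j where j: "j \<notin> {i, b}" using ex_index_notin by blast
  then have "axis j 1 \<in> Z"
    unfolding Z coord_hyperplane_def by (auto simp: axis_def vec_eq_iff)
  then show "\<exists>v\<in>Z. twisted_power_map a b c d v = v"
    using twisted_power_map_axis[of j b d] j assms(2) by blast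
qed

lemma preperiodic_var_twisted_power_map_iff:
  assumes "CARD('n::finite) \<ge> 2" and "a \<noteq> b" and "d > 0"
  shows "preperiodic_var (twisted_power_map a b c d) (coord_hyperplanes_union :: (complex^'n) set)
    \<longleftrightarrow> (\<exists>s t. s \<noteq> t \<and> ((\<lambda>z. z ^ d + c) ^^ s) 0 = ((\<lambda>z. z ^ d + c) ^^ t) 0)"
  unfolding preperiodic_var_def irr_component_coord_hyperplanes_union_iff[OF assms(1)]
proof safe
  fix s t i assume "s \<noteq> t" and "((\<lambda>z. z ^ d + c) ^^ s) 0 = ((\<lambda>z. z ^ d + c) ^^ t) 0"
  show "\<exists>s t. s \<noteq> t \<and> (pimg (twisted_power_map a b c d) ^^ s) (coord_hyperplane i)
    = (pimg (twisted_power_map a b c d) ^^ t) (coord_hyperplane i)"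
  proof (cases "i = a")
    case True
    show ?thesis
      unfolding True pimg_iterate_twisted_power_map_coord_hyperplane[OF assms(2,3)]
      using \<open>s \<noteq> t\<close> \<open>((\<lambda>z. z ^ d + c) ^^ s) 0 = ((\<lambda>z. z ^ d + c) ^^ t) 0\<close>
      by (intro exI[of _ s] exI[of _ t]) simp
  next
    case False
    then have "(pimg (twisted_power_map a b c d) ^^ 0) (coord_hyperplane i)
      = (pimg (twisted_power_map a b c d) ^^ 1) (coord_hyperplane i)"
      by (simp add: pimg_twisted_power_map_coord_hyperplane[OF assms(2,3)])
    then show ?thesis by blast
  qed
next
  assume "\<forall>Z. (\<exists>i. Z = coord_hyperplane i) \<longrightarrow>
    (\<exists>s t. s \<noteq> t \<and> (pimg (twisted_power_map a b c d) ^^ s) Z = (pimg (twisted_power_map a b c d) ^^ t) Z)"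
  then obtain s t where "s \<noteq> t" and
    "(pimg (twisted_power_map a b c d) ^^ s) (coord_hyperplane a)
      = (pimg (twisted_power_map a b c d) ^^ t) (coord_hyperplane a)"
    by blast
  then show "\<exists>s t. s \<noteq> t \<and> ((\<lambda>z. z ^ d + c) ^^ s) 0 = ((\<lambda>z. z ^ d + c) ^^ t) 0"
    unfolding pimg_iterate_twisted_power_map_coord_hyperplane[OF assms(2,3)]
      ratio_hyperplane_eq_iff[OF assms(2)]
    by blast
qed

theorem mainTheorem12:
  fixes n d :: nat and c :: complex and a b :: "'n::finite"
    and F :: "complex ^ 'n \<Rightarrow> complex ^ 'n"
  assumes "CARD('n) = n + 1" and "n \<ge> 2" and "d \<ge> 2" and "a \<noteq> b"
    and "F = (\<lambda>x. \<chi> i. if i = a then x $ a ^ d + c * x $ b ^ d else x $ i ^ d)"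
  shows "critical_locus F = {x. x \<noteq> 0 \<and> (\<Prod>i\<in>UNIV. x $ i) = 0}
    \<and> dyn_improper F (critical_locus F)
    \<and> (preperiodic_var F (critical_locus F) \<longleftrightarrow>
         (\<exists>s t. s \<noteq> t \<and> ((\<lambda>z. z ^ d + c) ^^ s) 0 = ((\<lambda>z. z ^ d + c) ^^ t) (0::complex)))"
proof -
  have F: "F = twisted_power_map a b c d"
    using assms(5) by (simp add: fun_eq_iff twisted_power_map_def)
  have "CARD('n) \<ge> 3" "CARD('n) \<ge> 2" and "d > 0" using assms(1-3) by simp_all
  then show ?thesis
    unfolding F critical_locus_twisted_power_map[OF assms(4,3)] coord_hyperplanes_union_def[symmetric]
    using dyn_improper_twisted_power_map preperiodic_var_twisted_power_map_iff[OF _ assms(4)]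
    by simp
qed

end
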